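(* Let $\mu_1,\dots,\mu_n\in\mathrm{Prob}([-R,R])$ and $h\in C_\mathbb{R}([-R,R]^n)$. Let $\Xi(N)=(\xi_1(N),\dots,\xi_n(N))$ and $\Xi'(N)=(\xi_1'(N),\dots,\xi_n'(N))$ be two approximating sequences for $(\mu_1,\dots,\mu_n)$. Then $$\limsup_{N\to\infty}\frac1N\log\Biggl[\frac{1}{(N!)^n}\sum_{\sigma_1,\dots,\sigma_n\in S_N}\exp\bigl(N\kappa_N(h(\sigma_1(\xi_1(N)),\dots,\sigma_n(\xi_n(N))))\bigr)\Biggr]$$ is equal to the same expression with $\xi_i(N)$ replaced by $\xi_i'(N)$ for all $i$. That is, the mutual pressure $P_\mathrm{sym}(h:\mu_1,\dots,\mu_n)$ does not depend on the choice of the approximating sequence.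
   Context: Fix $R>0$ and $n\in\mathbb{N}$. $\mathrm{Prob}([-R,R]^n)$ denotes the set of Borel probability measures on $[-R,R]^n$, and $C_\mathbb{R}([-R,R]^n)$ the real Banach space of real continuous functions on $[-R,R]^n$ with the sup-norm $\|f\|=\max|f|$. For $\mathbf{x}=(x_1,\dots,x_N)\in\mathbb{R}^N$ let $\kappa_N(\mathbf{x})=\frac1N\sum_{j=1}^Nx_j$; powers $\mathbf{x}^k$ and products of vectors are taken coordinatewise. Let $[-R,R]_\le^N=\{(x_1,\dots,x_N)\in[-R,R]^N:x_1\le\dots\le x_N\}$. The symmetric group $S_N$ acts on $\mathbb{R}^N$ by $\sigma(\mathbf{x})=(x_{\sigma^{-1}(1)},\dots,x_{\sigma^{-1}(N)})$. An approximating sequence for $(\mu_1,\dots,\mu_n)$, $\mu_i\in\mathrm{Prob}([-R,R])$, is a sequence $\Xi(N)=(\xi_1(N),\dots,\xi_n(N))$, $N\in\mathbb{N}$, with $\xi_i(N)\in[-R,R]_\le^N$ and $\kappa_N(\xi_i(N)^k)\to\int x^k\,d\mu_i(x)$ as $N\to\infty$ for all $k\in\mathbb{N}$ and $1\le i\le n$. For $h\in C_\mathbb{R}([-R,R]^n)$ and $\mathbf{x}_i=(x_{i1},\dots,x_{iN})\in[-R,R]^N$, $1\le i\le n$, set $\kappa_N(h(\mathbf{x}_1,\dots,\mathbf{x}_n))=\frac1N\sum_{j=1}^Nh(x_{1j},\dots,x_{nj})$. The mutual pressure $P_\mathrm{sym}(h:\mu_1,\dots,\mu_n)$ is defined as the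 displayed $\limsup$ computed with an approximating sequence. *)

theory Defs
  imports "HOL-Probability.Probability"
begin

text \<open>Vectors in [-R,R]^N are represented as functions nat \<Rightarrow> real, coordinates
  indexed by 0..N-1. The n factors are indexed by a finite type 'n (n = CARD('n)).\<close>

definition kappa :: "nat \<Rightarrow> (nat \<Rightarrow> real) \<Rightarrow> real" where
  "kappa N x = (1 / real N) * (\<Sum>j<N. x j)"

definition perm_act :: "(nat \<Rightarrow> nat) \<Rightarrow> (nat \<Rightarrow> real) \<Rightarrow> (nat \<Rightarrow> real)" where
  "perm_act \<sigma> x = (\<lambda>j. x (inv \<sigma> j))"

definition ordered_box :: "real \<Rightarrow> nat \<Rightarrow> (nat \<Rightarrow> real) set" where
  "ordered_box R N = {x. (\<forall>j<N. x j \<in> {-R..R}) \<and> (\<forall>j k. j \<le> k \<and> k < N \<longrightarrow> x j \<le> x k)}"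

definition approximating_seq ::
  "real \<Rightarrow> ('n \<Rightarrow> real measure) \<Rightarrow> ('n \<Rightarrow> nat \<Rightarrow> nat \<Rightarrow> real) \<Rightarrow> bool" where
  "approximating_seq R \<mu> \<xi> \<longleftrightarrow>
     (\<forall>i N. N \<ge> 1 \<longrightarrow> \<xi> i N \<in> ordered_box R N) \<and>
     (\<forall>i k. k \<ge> 1 \<longrightarrow>
        (\<lambda>N. kappa N (\<lambda>j. (\<xi> i N j) ^ k)) \<longlonglongrightarrow> (\<integral>x. x ^ k \<partial>(\<mu> i)))"

definition kappa_h :: "nat \<Rightarrow> (real^'n \<Rightarrow> real) \<Rightarrow> ('n \<Rightarrow> nat \<Rightarrow> real) \<Rightarrow> real" where
  "kappa_h N h x = (1 / real N) * (\<Sum>j<N. h (\<chi> i. x i j))"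

definition pressure_term ::
  "(real^'n::finite \<Rightarrow> real) \<Rightarrow> ('n \<Rightarrow> nat \<Rightarrow> nat \<Rightarrow> real) \<Rightarrow> nat \<Rightarrow> real" where
  "pressure_term h \<xi> N =
     (1 / real N) * ln ((1 / (fact N) ^ CARD('n)) *
       (\<Sum>\<sigma> \<in> PiE (UNIV::'n set) (\<lambda>_. {\<tau>. \<tau> permutes {..<N}}).
          exp (real N * kappa_h N h (\<lambda>i. perm_act (\<sigma> i) (\<xi> i N)))))"

definition mutual_pressure_seq ::
  "(real^'n::finite \<Rightarrow> real) \<Rightarrow> ('n \<Rightarrow> nat \<Rightarrow> nat \<Rightarrow> real) \<Rightarrow> ereal" where
  "mutual_pressure_seq h \<xi> = limsup (\<lambda>N. ereal (pressure_term h \<xi> N))"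

end

theory Submission
  imports Defs
begin

(* Two approximating sequences xi, xi' for the same measures have empirical moments
   with the same limits, so the difference of their empirical averages of x^k tends
   to 0.  By the Weierstrass approximation theorem the same holds for the empirical
   averages of every continuous test function on [-R,R].  Testing against piecewise
   linear ramps and using that the coordinates are sorted, the proportion of indices
   j with |xi_i(N)_j - xi'_i(N)_j| > d tends to 0 for every d > 0 (a comparison of
   empirical quantiles).  By uniform continuity of h on the cube, for every family of
   permutations the averages kappa_N(h(sigma xi)) and kappa_N(h(sigma xi')) then differ
   by at most eps + 2 max|h| times that proportion; since (1/N) log of a normalised
   sum of exponentials of N times these averages is 1-Lipschitz in the sup norm, the
   pressure terms differ by the same bound.  Hence their difference tends to 0 and
   the two limsups coincide. *)

lemma kappa_sum: "kappa N (\<lambda>j. \<Sum>i\<in>I. f i j) = (\<Sum>i\<in>I. kappa N (f i))"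
  by (simp add: kappa_def sum_distrib_left sum.swap[of _ I])

lemma kappa_cmult: "kappa N (\<lambda>j. c * f j) = c * kappa N f"
  by (simp add: kappa_def sum_distrib_left[symmetric] mult_ac)

lemma kappa_diff: "kappa N u - kappa N v = kappa N (\<lambda>j. u j - v j)"
  by (simp add: kappa_def sum_subtractf right_diff_distrib)

lemma kappa_abs_diff_eq:
  "\<bar>(\<Sum>j<N. u j) - (\<Sum>j<N. v j)\<bar> / real N = \<bar>kappa N u - kappa N v\<bar>"
proof -
  have "kappa N u - kappa N v = ((\<Sum>j<N. u j) - (\<Sum>j<N. v j)) / real N"
    by (simp add: kappa_def diff_divide_distrib)
  then show ?thesis by (simp add: abs_divide)
qed

lemma kappa_abs_le:
  assumes "\<And>j. j < N \<Longrightarrow> \<bar>u j\<bar> \<le> e" "0 \<le> e"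
  shows "\<bar>kappa N u\<bar> \<le> e"
proof (cases "N = 0")
  case True then show ?thesis using assms by (simp add: kappa_def)
next
  case False
  have "\<bar>\<Sum>j<N. u j\<bar> \<le> (\<Sum>j<N. \<bar>u j\<bar>)" by (rule sum_abs)
  also have "\<dots> \<le> (\<Sum>j<N. e)" by (rule sum_mono) (use assms in auto)
  finally have "\<bar>\<Sum>j<N. u j\<bar> \<le> real N * e" by simp
  then show ?thesis using False by (simp add: kappa_def abs_mult field_simps)
qed

section \<open>From moments to continuous test functions\<close>

text \<open>If the empirical moments of two arrays of points become asymptotically equal,
  so do their empirical averages of any polynomial (the constant term cancels).\<close>

lemma poly_moments:
  fixes x y :: "nat \<Rightarrow> nat \<Rightarrow> real"
  assumes mom: "\<And>k. k \<ge> 1 \<Longrightarrow> (\<lambda>N. kappa N (\<lambda>j. x N j ^ k) - kappa N (\<lambda>j. y N j ^ k)) \<longlonglongrightarrow> 0"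
  shows "(\<lambda>N. kappa N (\<lambda>j. \<Sum>i\<le>n. a i * x N j ^ i) - kappa N (\<lambda>j. \<Sum>i\<le>n. a i * y N j ^ i)) \<longlonglongrightarrow> 0"
proof -
  have eq: "kappa N (\<lambda>j. \<Sum>i\<le>n. a i * x N j ^ i) - kappa N (\<lambda>j. \<Sum>i\<le>n. a i * y N j ^ i)
      = (\<Sum>i\<le>n. a i * (kappa N (\<lambda>j. x N j ^ i) - kappa N (\<lambda>j. y N j ^ i)))" for N
    by (simp add: kappa_sum kappa_cmult sum_subtractf right_diff_distrib)
  have "(\<lambda>N. kappa N (\<lambda>j. x N j ^ i) - kappa N (\<lambda>j. y N j ^ i)) \<longlonglongrightarrow> 0" for i
    using mom[of i] by (cases "i = 0") simp_all
  then have "(\<lambda>N. \<Sum>i\<le>n. a i * (kappa N (\<lambda>j. x N j ^ i) - kappa N (\<lambda>j. y N j ^ i)))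
      \<longlonglongrightarrow> (\<Sum>i\<le>n. a i * 0)"
    by (intro tendsto_sum tendsto_mult tendsto_const)
  then show ?thesis by (simp add: eq)
qed

text \<open>The same for every continuous test function on \<open>[-R,R]\<close>, by uniform
  approximation with polynomials (Weierstrass) and an \<open>\<epsilon>/3\<close> argument.\<close>

lemma cont_moments:
  fixes x y :: "nat \<Rightarrow> nat \<Rightarrow> real"
  assumes mom: "\<And>k. k \<ge> 1 \<Longrightarrow> (\<lambda>N. kappa N (\<lambda>j. x N j ^ k) - kappa N (\<lambda>j. y N j ^ k)) \<longlonglongrightarrow> 0"
    and bx: "\<And>N j. j < N \<Longrightarrow> x N j \<in> {-R..R}"
    and by': "\<And>N j. j < N \<Longrightarrow> y N j \<in> {-R..R}"
    and f: "continuous_on {-R..R} f"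
  shows "(\<lambda>N. kappa N (\<lambda>j. f (x N j)) - kappa N (\<lambda>j. f (y N j))) \<longlonglongrightarrow> 0"
proof (rule LIMSEQ_I)
  fix r :: real assume r: "0 < r"
  obtain g where g: "real_polynomial_function g" "\<And>s. s \<in> {-R..R} \<Longrightarrow> \<bar>f s - g s\<bar> < r/3"
    using Stone_Weierstrass_real_polynomial_function[OF compact_Icc f, of "r/3"] r by auto
  obtain a n where gdef: "g = (\<lambda>s. \<Sum>i\<le>n. a i * s^i)"
    using real_polynomial_function_imp_sum[OF g(1)] by auto
  have "(\<lambda>N. kappa N (\<lambda>j. g (x N j)) - kappa N (\<lambda>j. g (y N j))) \<longlonglongrightarrow> 0"
    unfolding gdef by (rule poly_moments[OF mom])
  then obtain no where no: "\<And>N. N \<ge> no \<Longrightarrow> \<bar>kappa N (\<lambda>j. g (x N j)) - kappa N (\<lambda>j. g (y N j))\<bar> < r/3"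
    using LIMSEQ_D[of _ 0 "r/3"] r by fastforce
  show "\<exists>no. \<forall>N\<ge>no. norm (kappa N (\<lambda>j. f (x N j)) - kappa N (\<lambda>j. f (y N j)) - 0) < r"
  proof (intro exI allI impI)
    fix N assume N: "N \<ge> no"
    have fg_x: "\<bar>kappa N (\<lambda>j. f (x N j)) - kappa N (\<lambda>j. g (x N j))\<bar> \<le> r/3"
      unfolding kappa_diff by (rule kappa_abs_le) (use g(2) bx r in \<open>auto intro: less_imp_le\<close>)
    have fg_y: "\<bar>kappa N (\<lambda>j. f (y N j)) - kappa N (\<lambda>j. g (y N j))\<bar> \<le> r/3"
      unfolding kappa_diff by (rule kappa_abs_le) (use g(2) by' r in \<open>auto intro: less_imp_le\<close>)
    show "norm (kappa N (\<lambda>j. f (x N j)) - kappa N (\<lambda>j. f (y N j)) - 0) < r"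
      using fg_x fg_y no[OF N] unfolding real_norm_def diff_0_right abs_le_iff abs_less_iff
      by linarith
  qed
qed

section \<open>Sorted arrays with matching test averages are close coordinatewise\<close>

text \<open>The continuous ramp which is \<open>1\<close> on \<open>(-\<infinity>,t]\<close>, \<open>0\<close> on \<open>[t+d,\<infinity>)\<close> and linear
  in between; it is a continuous stand-in for the indicator of \<open>(-\<infinity>,t]\<close>.\<close>

definition ramp :: "real \<Rightarrow> real \<Rightarrow> real \<Rightarrow> real" where
  "ramp t d s = max 0 (min 1 ((t + d - s) / d))"

lemma continuous_on_ramp: "d \<noteq> 0 \<Longrightarrow> continuous_on A (ramp t d)"
  unfolding ramp_def by (intro continuous_intros) auto

text \<open>For sorted \<open>x\<close>, \<open>y\<close>: the indices with \<open>y j \<le> t < t + d < x j\<close> form a set of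
  indices counted by the ramp sum of \<open>y\<close> but not by that of \<open>x\<close>; because both arrays
  are sorted these sets are nested, so their number is bounded by the difference
  of the two ramp sums.\<close>

lemma count_crossing_le_ramp_diff:
  fixes x y :: "nat \<Rightarrow> real"
  assumes d: "d > 0"
    and sx: "\<And>j k. j \<le> k \<Longrightarrow> k < N \<Longrightarrow> x j \<le> x k"
    and sy: "\<And>j k. j \<le> k \<Longrightarrow> k < N \<Longrightarrow> y j \<le> y k"
  shows "real (card {j. j < N \<and> y j \<le> t \<and> t + d < x j})
     \<le> \<bar>(\<Sum>j<N. ramp t d (y j)) - (\<Sum>j<N. ramp t d (x j))\<bar>"
proof (cases "{j. j < N \<and> y j \<le> t \<and> t + d < x j} = {}")
  case True then show ?thesis by (simp only: True card.empty)
next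
  case False
  define S where "S = {j. j < N \<and> y j \<le> t \<and> t + d < x j}"
  define A where "A = {j. j < N \<and> y j \<le> t}"
  define C where "C = {j. j < N \<and> x j \<le> t + d}"
  from False obtain j0 where j0: "j0 < N" "y j0 \<le> t" "t + d < x j0" by auto
  have CA: "C \<subseteq> A"
  proof
    fix k assume k: "k \<in> C"
    have "k < j0"
    proof (rule ccontr)
      assume "\<not> k < j0"
      then have "x j0 \<le> x k" using sx k by (auto simp: C_def)
      then show False using k j0 by (auto simp: C_def)
    qed
    then have "y k \<le> y j0" using sy j0 by auto
    then show "k \<in> A" using k j0 by (auto simp: A_def C_def)
  qed
  have fA: "finite A" and fC: "finite C" by (auto simp: A_def C_def)
  have "card S \<le> card (A - C)" using fA by (intro card_mono) (auto simp: S_def A_def C_def)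
  also have "card (A - C) = card A - card C" by (rule card_Diff_subset[OF fC CA])
  finally have card_S: "real (card S) \<le> real (card A) - real (card C)"
    using card_mono[OF fA CA] by linarith
  have "real (card A) = (\<Sum>j\<in>A. ramp t d (y j))"
    using d by (simp add: A_def ramp_def)
  also have "\<dots> \<le> (\<Sum>j<N. ramp t d (y j))"
    by (rule sum_mono2) (auto simp: A_def ramp_def)
  finally have ramp_y: "real (card A) \<le> (\<Sum>j<N. ramp t d (y j))" .
  have "(\<Sum>j<N. ramp t d (x j)) = (\<Sum>j\<in>C. ramp t d (x j))"
  proof (rule sum.mono_neutral_right)
    show "\<forall>i\<in>{..<N} - C. ramp t d (x i) = 0"
    proof
      fix i assume "i \<in> {..<N} - C"
      then have "(t + d - x i) / d < 0" using d by (auto simp: C_def divide_neg_pos)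
      then show "ramp t d (x i) = 0" by (simp add: ramp_def)
    qed
  qed (auto simp: C_def)
  also have "\<dots> \<le> (\<Sum>j\<in>C. 1)"
    by (rule sum_mono) (auto simp: ramp_def)
  finally have ramp_x: "(\<Sum>j<N. ramp t d (x j)) \<le> real (card C)" by simp
  show ?thesis using card_S ramp_y ramp_x by (simp add: S_def)
qed

text \<open>Covering \<open>[-R,R]\<close> by the thresholds \<open>-R + m d\<close>: every index with \<open>y j + 2d < x j\<close>
  crosses one of finitely many thresholds, so the number of such indices is bounded
  by a finite sum of ramp-sum differences.\<close>

lemma count_far_above_le_ramp_diffs:
  fixes x y :: "nat \<Rightarrow> real"
  assumes d: "d > 0"
    and sx: "\<And>j k. j \<le> k \<Longrightarrow> k < N \<Longrightarrow> x j \<le> x k"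
    and sy: "\<And>j k. j \<le> k \<Longrightarrow> k < N \<Longrightarrow> y j \<le> y k"
    and by': "\<And>j. j < N \<Longrightarrow> y j \<in> {-R..R}"
  shows "real (card {j. j < N \<and> y j + 2 * d < x j})
     \<le> (\<Sum>m\<le>nat \<lceil>2 * R / d\<rceil>. \<bar>(\<Sum>j<N. ramp (-R + real m * d) d (y j))
                                - (\<Sum>j<N. ramp (-R + real m * d) d (x j))\<bar>)"
proof -
  define M where "M = nat \<lceil>2 * R / d\<rceil>"
  define S where "S = (\<lambda>m. {j. j < N \<and> y j \<le> -R + real m * d \<and> -R + real m * d + d < x j})"
  have cover: "{j. j < N \<and> y j + 2 * d < x j} \<subseteq> (\<Union>m\<le>M. S m)"
  proof
    fix j assume j: "j \<in> {j. j < N \<and> y j + 2 * d < x j}"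
    then have jN: "j < N" and yx: "y j + 2 * d < x j" by auto
    have yb: "-R \<le> y j" "y j \<le> R" using by'[OF jN] by auto
    define z where "z = (y j + R) / d"
    define m where "m = nat \<lceil>z\<rceil>"
    have "z \<ge> 0" using yb d by (simp add: z_def)
    then have rm: "real m = of_int \<lceil>z\<rceil>" by (simp add: m_def)
    have "d * z = y j + R" using d by (simp add: z_def)
    moreover have "d * z \<le> d * real m" using rm d by (intro mult_left_mono) linarith+
    moreover have "d * real m < d * (z + 1)" using rm d by (intro mult_strict_left_mono) linarith+
    ultimately have "y j \<le> -R + real m * d" "-R + real m * d < y j + d"
      by (auto simp: algebra_simps)
    then have "j \<in> S m" using jN yx by (auto simp: S_def)
    moreover have "z \<le> 2 * R / d" using yb d by (simp add: z_def divide_right_mono)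
    then have "m \<le> M" unfolding m_def M_def by (intro nat_mono ceiling_mono)
    ultimately show "j \<in> (\<Union>m\<le>M. S m)" by auto
  qed
  have "card {j. j < N \<and> y j + 2 * d < x j} \<le> card (\<Union>m\<le>M. S m)"
    by (rule card_mono[OF _ cover]) (auto simp: S_def)
  also have "\<dots> \<le> (\<Sum>m\<le>M. card (S m))" by (rule card_UN_le) simp
  finally have "real (card {j. j < N \<and> y j + 2 * d < x j}) \<le> (\<Sum>m\<le>M. real (card (S m)))"
    by (metis of_nat_le_iff of_nat_sum)
  also have "\<dots> \<le> (\<Sum>m\<le>M. \<bar>(\<Sum>j<N. ramp (-R + real m * d) d (y j))
                           - (\<Sum>j<N. ramp (-R + real m * d) d (x j))\<bar>)"
    by (rule sum_mono) (unfold S_def, rule count_crossing_le_ramp_diff[OF d sx sy])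
  finally show ?thesis by (simp add: M_def)
qed

lemma far_proportion_tendsto_zero:
  fixes x y :: "nat \<Rightarrow> nat \<Rightarrow> real"
  assumes mom: "\<And>k. k \<ge> 1 \<Longrightarrow> (\<lambda>N. kappa N (\<lambda>j. x N j ^ k) - kappa N (\<lambda>j. y N j ^ k)) \<longlonglongrightarrow> 0"
    and bx: "\<And>N j. j < N \<Longrightarrow> x N j \<in> {-R..R}"
    and by': "\<And>N j. j < N \<Longrightarrow> y N j \<in> {-R..R}"
    and sx: "\<And>N j k. j \<le> k \<Longrightarrow> k < N \<Longrightarrow> x N j \<le> x N k"
    and sy: "\<And>N j k. j \<le> k \<Longrightarrow> k < N \<Longrightarrow> y N j \<le> y N k"
    and "d > 0"
  shows "(\<lambda>N. real (card {j. j < N \<and> d < \<bar>x N j - y N j\<bar>}) / real N) \<longlonglongrightarrow> 0"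
proof -
  define e where "e = d / 2"
  have e: "e > 0" and de: "d = 2 * e" using \<open>d > 0\<close> by (simp_all add: e_def)
  define M where "M = nat \<lceil>2 * R / e\<rceil>"
  define t where "t = (\<lambda>m::nat. -R + real m * e)"
  define rx where "rx = (\<lambda>N m. \<Sum>j<N. ramp (t m) e (x N j))"
  define ry where "ry = (\<lambda>N m. \<Sum>j<N. ramp (t m) e (y N j))"
  define b where "b = (\<lambda>N. 2 * (\<Sum>m\<le>M. \<bar>kappa N (\<lambda>j. ramp (t m) e (x N j))
                                        - kappa N (\<lambda>j. ramp (t m) e (y N j))\<bar>))"
  have "b \<longlonglongrightarrow> 2 * (\<Sum>m\<le>M. 0)"
    unfolding b_def
    by (intro tendsto_mult tendsto_const tendsto_sum tendsto_rabs_zero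
          cont_moments[OF mom bx by'] continuous_on_ramp) (use e in auto)
  then have b0: "b \<longlonglongrightarrow> 0" by simp
  have far_le: "real (card {j. j < N \<and> d < \<bar>x N j - y N j\<bar>}) / real N \<le> b N" for N
  proof -
    have "{j. j < N \<and> d < \<bar>x N j - y N j\<bar>}
        \<subseteq> {j. j < N \<and> y N j + 2 * e < x N j} \<union> {j. j < N \<and> x N j + 2 * e < y N j}"
      by (auto simp: de)
    then have "card {j. j < N \<and> d < \<bar>x N j - y N j\<bar>}
        \<le> card ({j. j < N \<and> y N j + 2 * e < x N j} \<union> {j. j < N \<and> x N j + 2 * e < y N j})"
      by (rule card_mono[rotated]) auto
    also have "\<dots> \<le> card {j. j < N \<and> y N j + 2 * e < x N j} + card {j. j < N \<and> x N j + 2 * e < y N j}"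
      by (rule card_Un_le)
    finally have "real (card {j. j < N \<and> d < \<bar>x N j - y N j\<bar>})
        \<le> real (card {j. j < N \<and> y N j + 2 * e < x N j}) + real (card {j. j < N \<and> x N j + 2 * e < y N j})"
      by linarith
    moreover have "real (card {j. j < N \<and> y N j + 2 * e < x N j}) \<le> (\<Sum>m\<le>M. \<bar>ry N m - rx N m\<bar>)"
      unfolding M_def t_def rx_def ry_def by (rule count_far_above_le_ramp_diffs[OF e sx sy by'])
    moreover have "real (card {j. j < N \<and> x N j + 2 * e < y N j}) \<le> (\<Sum>m\<le>M. \<bar>rx N m - ry N m\<bar>)"
      unfolding M_def t_def rx_def ry_def by (rule count_far_above_le_ramp_diffs[OF e sy sx bx])
    ultimately have "real (card {j. j < N \<and> d < \<bar>x N j - y N j\<bar>}) \<le> 2 * (\<Sum>m\<le>M. \<bar>rx N m - ry N m\<bar>)"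
      by (simp add: abs_minus_commute)
    then have "real (card {j. j < N \<and> d < \<bar>x N j - y N j\<bar>}) / real N
        \<le> 2 * (\<Sum>m\<le>M. \<bar>rx N m - ry N m\<bar>) / real N"
      by (rule divide_right_mono) simp
    also have "\<dots> = b N"
      unfolding b_def rx_def ry_def times_divide_eq_right[symmetric] sum_divide_distrib
        kappa_abs_diff_eq ..
    finally show ?thesis .
  qed
  show ?thesis
    by (rule tendsto_sandwich[OF _ _ tendsto_const b0]) (use far_le in auto)
qed

section \<open>Stability of the pressure term under coordinatewise perturbation\<close>

lemma cube_eq_cbox: "{x::real^'n::finite. \<forall>i. x $ i \<in> {-R..R}} = cbox (\<chi> i. -R) (\<chi> i. R)"
  by (auto simp: mem_box_cart)

lemma bounded_on_cube:
  fixes h :: "real^'n::finite \<Rightarrow> real"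
  assumes "continuous_on {x. \<forall>i. x $ i \<in> {-R..R}} h"
  obtains H where "H \<ge> 0" "\<And>v. \<forall>i. v $ i \<in> {-R..R} \<Longrightarrow> \<bar>h v\<bar> \<le> H"
proof -
  have "compact {x::real^'n. \<forall>i. x $ i \<in> {-R..R}}"
    unfolding cube_eq_cbox by (rule compact_cbox)
  then have "bounded (h ` {x. \<forall>i. x $ i \<in> {-R..R}})"
    by (intro compact_imp_bounded compact_continuous_image[OF assms])
  then obtain H0 where H0: "\<forall>y\<in>h ` {x. \<forall>i. x $ i \<in> {-R..R}}. norm y \<le> H0"
    unfolding bounded_iff by blast
  show thesis
  proof (rule that[of "max H0 0"])
    fix v :: "real^'n" assume "\<forall>i. v $ i \<in> {-R..R}"
    then have "norm (h v) \<le> H0" using H0 by blast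
    then show "\<bar>h v\<bar> \<le> max H0 0" by simp
  qed simp
qed

lemma coordinatewise_uniform_continuity_on_cube:
  fixes h :: "real^'n::finite \<Rightarrow> real"
  assumes "continuous_on {x. \<forall>i. x $ i \<in> {-R..R}} h" and "e > 0"
  obtains d where "d > 0"
    "\<And>v w. \<forall>i. v $ i \<in> {-R..R} \<Longrightarrow> \<forall>i. w $ i \<in> {-R..R} \<Longrightarrow>
       \<forall>i. \<bar>v $ i - w $ i\<bar> \<le> d \<Longrightarrow> \<bar>h v - h w\<bar> \<le> e"
proof -
  have "uniformly_continuous_on {x. \<forall>i. x $ i \<in> {-R..R}} h"
    by (rule compact_uniformly_continuous[OF assms(1)]) (unfold cube_eq_cbox, rule compact_cbox)
  then obtain dd where dd: "dd > 0" "\<forall>w\<in>{x. \<forall>i. x $ i \<in> {-R..R}}. \<forall>v\<in>{x. \<forall>i. x $ i \<in> {-R..R}}.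
      dist v w < dd \<longrightarrow> dist (h v) (h w) < e"
    using \<open>e > 0\<close> unfolding uniformly_continuous_on_def by blast
  define d where "d = dd / (2 * real CARD('n))"
  show thesis
  proof (rule that)
    show "d > 0" using dd by (simp add: d_def)
    fix v w :: "real^'n"
    assume v: "\<forall>i. v $ i \<in> {-R..R}" and w: "\<forall>i. w $ i \<in> {-R..R}"
      and vw: "\<forall>i. \<bar>v $ i - w $ i\<bar> \<le> d"
    have "norm (v - w) \<le> (\<Sum>i\<in>UNIV. \<bar>(v - w) $ i\<bar>)" by (rule norm_le_l1_cart)
    also have "\<dots> \<le> (\<Sum>i\<in>(UNIV::'n set). d)" using vw by (intro sum_mono) simp
    also have "\<dots> < dd" using dd by (simp add: d_def)
    finally have "dist (h v) (h w) < e" using dd(2) v w by (simp add: dist_norm)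
    then show "\<bar>h v - h w\<bar> \<le> e" by (simp add: dist_real_def)
  qed
qed

text \<open>For one family of permutations: the coordinates \<open>j\<close> at which some permuted
  factor differs by more than \<open>d\<close> are at most the sum of the far counts; elsewhere
  \<open>h\<close> changes by at most \<open>e\<close>, there by at most \<open>2H\<close>.\<close>

lemma kappa_h_perm_diff_le:
  fixes h :: "real^'n::finite \<Rightarrow> real" and x y :: "'n \<Rightarrow> nat \<Rightarrow> real"
    and \<sigma> :: "'n \<Rightarrow> nat \<Rightarrow> nat"
  assumes \<sigma>: "\<And>i. \<sigma> i permutes {..<N}"
    and bx: "\<And>i j. j < N \<Longrightarrow> x i j \<in> {-R..R}"
    and by': "\<And>i j. j < N \<Longrightarrow> y i j \<in> {-R..R}"
    and hb: "\<And>v. \<forall>i. v $ i \<in> {-R..R} \<Longrightarrow> \<bar>h v\<bar> \<le> H"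
    and hc: "\<And>v w. \<forall>i. v $ i \<in> {-R..R} \<Longrightarrow> \<forall>i. w $ i \<in> {-R..R} \<Longrightarrow>
               \<forall>i. \<bar>v $ i - w $ i\<bar> \<le> d \<Longrightarrow> \<bar>h v - h w\<bar> \<le> e"
    and e: "e \<ge> 0" and H: "H \<ge> 0"
  shows "\<bar>kappa_h N h (\<lambda>i. perm_act (\<sigma> i) (x i)) - kappa_h N h (\<lambda>i. perm_act (\<sigma> i) (y i))\<bar>
         \<le> e + 2 * H * (\<Sum>i\<in>UNIV. real (card {j. j < N \<and> d < \<bar>x i j - y i j\<bar>})) / real N"
proof (cases "N = 0")
  case True then show ?thesis using e by (simp add: kappa_h_def)
next
  case False
  define B where "B = (\<lambda>i. {j. j < N \<and> d < \<bar>x i j - y i j\<bar>})"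
  define Bad where "Bad = (\<Union>i. \<sigma> i ` B i)"
  define u where "u = (\<lambda>j. h (\<chi> i. x i (inv (\<sigma> i) j)))"
  define w where "w = (\<lambda>j. h (\<chi> i. y i (inv (\<sigma> i) j)))"
  have invN: "inv (\<sigma> i) j < N" if "j < N" for i j
    using permutes_in_image[OF permutes_inv[OF \<sigma>[of i]]] that by auto
  have pointwise: "\<bar>u j - w j\<bar> \<le> e + (if j \<in> Bad then 2 * H else 0)" if j: "j < N" for j
  proof (cases "j \<in> Bad")
    case True
    have "\<bar>u j\<bar> \<le> H" unfolding u_def by (rule hb) (use bx invN j in auto)
    moreover have "\<bar>w j\<bar> \<le> H" unfolding w_def by (rule hb) (use by' invN j in auto)
    ultimately show ?thesis using True e by simp
  next
    case False
    have "\<bar>x i (inv (\<sigma> i) j) - y i (inv (\<sigma> i) j)\<bar> \<le> d" for i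
    proof (rule ccontr)
      assume "\<not> ?thesis"
      then have "inv (\<sigma> i) j \<in> B i" using invN[OF j] by (auto simp: B_def)
      then have "\<sigma> i (inv (\<sigma> i) j) \<in> Bad" by (auto simp: Bad_def)
      then show False using False permutes_inverses(1)[OF \<sigma>[of i]] by simp
    qed
    then have "\<bar>u j - w j\<bar> \<le> e" unfolding u_def w_def
      by (intro hc) (use bx by' invN j in auto)
    then show ?thesis using False by simp
  qed
  have fB: "finite (B i)" for i by (auto simp: B_def)
  have "card Bad \<le> (\<Sum>i\<in>UNIV. card (\<sigma> i ` B i))"
    unfolding Bad_def by (rule card_UN_le) simp
  also have "\<dots> \<le> (\<Sum>i\<in>UNIV. card (B i))"
    by (intro sum_mono card_image_le fB)
  finally have card_Bad: "real (card Bad) \<le> (\<Sum>i\<in>UNIV. real (card (B i)))"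
    by (metis of_nat_le_iff of_nat_sum)
  have fBad: "finite Bad" using fB by (auto simp: Bad_def)
  have "\<bar>\<Sum>j<N. u j - w j\<bar> \<le> (\<Sum>j<N. \<bar>u j - w j\<bar>)" by (rule sum_abs)
  also have "\<dots> \<le> (\<Sum>j<N. e + (if j \<in> Bad then 2 * H else 0))"
    by (rule sum_mono) (use pointwise in auto)
  also have "\<dots> = real N * e + 2 * H * real (card ({..<N} \<inter> Bad))"
    by (simp add: sum.distrib sum.If_cases Int_commute)
  also have "\<dots> \<le> real N * e + 2 * H * (\<Sum>i\<in>UNIV. real (card (B i)))"
    using H card_Bad card_mono[OF fBad, of "{..<N} \<inter> Bad"]
    by (intro add_left_mono mult_left_mono) auto
  finally have sum_le: "\<bar>\<Sum>j<N. u j - w j\<bar> \<le> real N * e + 2 * H * (\<Sum>i\<in>UNIV. real (card (B i)))" .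
  have "kappa_h N h (\<lambda>i. perm_act (\<sigma> i) (x i)) - kappa_h N h (\<lambda>i. perm_act (\<sigma> i) (y i))
      = (\<Sum>j<N. u j - w j) / real N"
    by (simp add: kappa_h_def perm_act_def u_def w_def sum_subtractf diff_divide_distrib)
  also have "\<bar>\<dots>\<bar> \<le> (real N * e + 2 * H * (\<Sum>i\<in>UNIV. real (card (B i)))) / real N"
    unfolding abs_divide abs_of_nat using sum_le by (intro divide_right_mono) auto
  also have "\<dots> = e + 2 * H * (\<Sum>i\<in>UNIV. real (card (B i))) / real N"
    using False by (simp add: add_divide_distrib)
  finally show ?thesis unfolding B_def .
qed

lemma ln_sum_exp_le:
  fixes a b :: "'a \<Rightarrow> real"
  assumes fin: "finite I" and ne: "I \<noteq> {}" and K: "K > 0"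
    and ab: "\<And>s. s \<in> I \<Longrightarrow> a s \<le> b s + c"
  shows "ln (K * (\<Sum>s\<in>I. exp (a s))) \<le> c + ln (K * (\<Sum>s\<in>I. exp (b s)))"
proof -
  have pos_b: "(\<Sum>s\<in>I. exp (b s)) > 0" using fin ne by (intro sum_pos) auto
  have pos_a: "(\<Sum>s\<in>I. exp (a s)) > 0" using fin ne by (intro sum_pos) auto
  have "(\<Sum>s\<in>I. exp (a s)) \<le> (\<Sum>s\<in>I. exp c * exp (b s))"
    by (rule sum_mono) (use ab in \<open>auto simp: exp_add[symmetric] add.commute\<close>)
  also have "\<dots> = exp c * (\<Sum>s\<in>I. exp (b s))" by (simp add: sum_distrib_left)
  finally have "K * (\<Sum>s\<in>I. exp (a s)) \<le> exp c * (K * (\<Sum>s\<in>I. exp (b s)))"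
    using K by (simp add: mult_left_mono mult.left_commute)
  then have "ln (K * (\<Sum>s\<in>I. exp (a s))) \<le> ln (exp c * (K * (\<Sum>s\<in>I. exp (b s))))"
    using K pos_a pos_b by (subst ln_le_cancel_iff) auto
  also have "\<dots> = c + ln (K * (\<Sum>s\<in>I. exp (b s)))"
    using K pos_b by (simp add: ln_mult)
  finally show ?thesis .
qed

lemma pressure_term_diff_le:
  fixes h :: "real^'n::finite \<Rightarrow> real" and \<xi> \<xi>' :: "'n \<Rightarrow> nat \<Rightarrow> nat \<Rightarrow> real"
  assumes c: "\<And>\<sigma>. \<sigma> \<in> PiE (UNIV::'n set) (\<lambda>_. {\<tau>. \<tau> permutes {..<N}}) \<Longrightarrow>
     \<bar>kappa_h N h (\<lambda>i. perm_act (\<sigma> i) (\<xi> i N)) - kappa_h N h (\<lambda>i. perm_act (\<sigma> i) (\<xi>' i N))\<bar> \<le> c"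
  shows "\<bar>pressure_term h \<xi> N - pressure_term h \<xi>' N\<bar> \<le> c"
proof -
  define I where "I = PiE (UNIV::'n set) (\<lambda>_. {\<tau>. \<tau> permutes {..<N}})"
  have fin: "finite I" unfolding I_def by (intro finite_PiE) (auto simp: finite_permutations)
  have idI: "(\<lambda>_. id) \<in> I" unfolding I_def by (auto simp: permutes_id)
  then have ne: "I \<noteq> {}" by auto
  have c0: "c \<ge> 0" using c[of "\<lambda>_. id"] idI I_def by force
  show ?thesis
  proof (cases "N = 0")
    case True then show ?thesis using c0 by (simp add: pressure_term_def)
  next
    case False
    define K where "K = 1 / (fact N :: real) ^ CARD('n)"
    have K: "K > 0" by (simp add: K_def)
    define a where "a = (\<lambda>\<sigma>. real N * kappa_h N h (\<lambda>i. perm_act (\<sigma> i) (\<xi> i N)))"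
    define b where "b = (\<lambda>\<sigma>. real N * kappa_h N h (\<lambda>i. perm_act (\<sigma> i) (\<xi>' i N)))"
    have ab: "\<bar>a s - b s\<bar> \<le> real N * c" if "s \<in> I" for s
    proof -
      have "\<bar>a s - b s\<bar> = real N * \<bar>kappa_h N h (\<lambda>i. perm_act (s i) (\<xi> i N))
                                   - kappa_h N h (\<lambda>i. perm_act (s i) (\<xi>' i N))\<bar>"
        by (simp add: a_def b_def right_diff_distrib[symmetric] abs_mult)
      also have "\<dots> \<le> real N * c" using c[of s] that I_def by (intro mult_left_mono) auto
      finally show ?thesis .
    qed
    have "ln (K * (\<Sum>s\<in>I. exp (a s))) \<le> real N * c + ln (K * (\<Sum>s\<in>I. exp (b s)))"
      and "ln (K * (\<Sum>s\<in>I. exp (b s))) \<le> real N * c + ln (K * (\<Sum>s\<in>I. exp (a s)))"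
      by (rule ln_sum_exp_le[OF fin ne K], use ab in \<open>force simp: abs_le_iff\<close>)+
    then have "\<bar>ln (K * (\<Sum>s\<in>I. exp (a s))) - ln (K * (\<Sum>s\<in>I. exp (b s)))\<bar> / real N \<le> c"
      using False by (simp add: divide_le_eq mult.commute abs_le_iff)
    moreover have "pressure_term h \<xi> N - pressure_term h \<xi>' N
       = (ln (K * (\<Sum>s\<in>I. exp (a s))) - ln (K * (\<Sum>s\<in>I. exp (b s)))) / real N"
      by (simp add: pressure_term_def K_def I_def a_def b_def diff_divide_distrib)
    ultimately show ?thesis by (simp add: abs_divide)
  qed
qed

lemma pressure_term_diff_tendsto_zero:
  fixes h :: "real^'n::finite \<Rightarrow> real" and \<xi> \<xi>' :: "'n \<Rightarrow> nat \<Rightarrow> nat \<Rightarrow> real"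
  assumes hcont: "continuous_on {x. \<forall>i. x $ i \<in> {-R..R}} h"
    and bx: "\<And>i N j. j < N \<Longrightarrow> \<xi> i N j \<in> {-R..R}"
    and by': "\<And>i N j. j < N \<Longrightarrow> \<xi>' i N j \<in> {-R..R}"
    and far: "\<And>i d. d > 0 \<Longrightarrow>
      (\<lambda>N. real (card {j. j < N \<and> d < \<bar>\<xi> i N j - \<xi>' i N j\<bar>}) / real N) \<longlonglongrightarrow> 0"
  shows "(\<lambda>N. pressure_term h \<xi> N - pressure_term h \<xi>' N) \<longlonglongrightarrow> 0"
proof (rule LIMSEQ_I)
  fix r :: real assume r: "r > 0"
  obtain H where H: "H \<ge> 0" "\<And>v. \<forall>i. v $ i \<in> {-R..R} \<Longrightarrow> \<bar>h v\<bar> \<le> H"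
    using bounded_on_cube[OF hcont] by blast
  have "r / 2 > 0" using r by simp
  then obtain d where d: "d > 0" "\<And>v w. \<forall>i. v $ i \<in> {-R..R} \<Longrightarrow> \<forall>i. w $ i \<in> {-R..R} \<Longrightarrow>
      \<forall>i. \<bar>v $ i - w $ i\<bar> \<le> d \<Longrightarrow> \<bar>h v - h w\<bar> \<le> r / 2"
    using coordinatewise_uniform_continuity_on_cube[OF hcont] by blast
  define b where "b = (\<lambda>N. 2 * H * (\<Sum>i\<in>UNIV. real (card {j. j < N \<and> d < \<bar>\<xi> i N j - \<xi>' i N j\<bar>})) / real N)"
  have "b \<longlonglongrightarrow> 2 * H * (\<Sum>i\<in>(UNIV::'n set). 0)"
    unfolding b_def times_divide_eq_right[symmetric] sum_divide_distrib
    by (intro tendsto_mult tendsto_const tendsto_sum far d)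
  then have "\<forall>\<^sub>F N in sequentially. b N < r / 2"
    using order_tendstoD(2)[of b 0 sequentially "r / 2"] r by simp
  then obtain no where no: "\<And>N. N \<ge> no \<Longrightarrow> b N < r / 2"
    unfolding eventually_sequentially by blast
  have "\<bar>pressure_term h \<xi> N - pressure_term h \<xi>' N\<bar> \<le> r / 2 + b N" for N
    unfolding b_def
    by (intro pressure_term_diff_le kappa_h_perm_diff_le[where R = R] H d bx by')
       (use r in \<open>auto simp: PiE_iff\<close>)
  then show "\<exists>no. \<forall>N\<ge>no. norm (pressure_term h \<xi> N - pressure_term h \<xi>' N - 0) < r"
    using no by (metis add_less_cancel_left diff_zero field_sum_of_halves le_less_trans real_norm_def)
qed

lemma limsup_eq_if_diff_tendsto_zero:
  fixes f g :: "nat \<Rightarrow> real"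
  assumes "(\<lambda>N. f N - g N) \<longlonglongrightarrow> 0"
  shows "limsup (\<lambda>N. ereal (f N)) = limsup (\<lambda>N. ereal (g N))"
proof -
  have "limsup (\<lambda>N. ereal (f N)) = limsup (\<lambda>N. ereal (f N - g N) + ereal (g N))"
    by simp
  also have "\<dots> = 0 + limsup (\<lambda>N. ereal (g N))"
    by (rule ereal_limsup_lim_add) (use assms in \<open>auto simp: zero_ereal_def intro: tendsto_ereal\<close>)
  finally show ?thesis by simp
qed

lemma approximating_seq_in_box:
  "approximating_seq R \<mu> \<eta> \<Longrightarrow> j < N \<Longrightarrow> \<eta> i N j \<in> {-R..R}"
  by (auto simp: approximating_seq_def ordered_box_def)

lemma approximating_seq_sorted:
  "approximating_seq R \<mu> \<eta> \<Longrightarrow> j \<le> k \<Longrightarrow> k < N \<Longrightarrow> \<eta> i N j \<le> \<eta> i N k"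
  by (auto simp: approximating_seq_def ordered_box_def)

lemma approximating_seq_moment_diff:
  assumes "approximating_seq R \<mu> \<xi>" "approximating_seq R \<mu> \<xi>'" "k \<ge> 1"
  shows "(\<lambda>N. kappa N (\<lambda>j. \<xi> i N j ^ k) - kappa N (\<lambda>j. \<xi>' i N j ^ k)) \<longlonglongrightarrow> 0"
proof -
  have "(\<lambda>N. kappa N (\<lambda>j. \<xi> i N j ^ k) - kappa N (\<lambda>j. \<xi>' i N j ^ k))
      \<longlonglongrightarrow> (\<integral>x. x ^ k \<partial>(\<mu> i)) - (\<integral>x. x ^ k \<partial>(\<mu> i))"
    using assms by (intro tendsto_diff) (auto simp: approximating_seq_def)
  then show ?thesis by simp
qed

theorem lemma1p2:
  fixes R :: real
    and \<mu> :: "'n::finite \<Rightarrow> real measure"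
    and h :: "real^'n \<Rightarrow> real"
    and \<xi> \<xi>' :: "'n \<Rightarrow> nat \<Rightarrow> nat \<Rightarrow> real"
  assumes "R > 0"
    and "\<And>i. prob_space (\<mu> i)"
    and "\<And>i. sets (\<mu> i) = sets borel"
    and "\<And>i. emeasure (\<mu> i) {-R..R} = 1"
    and "continuous_on {x. \<forall>i. x $ i \<in> {-R..R}} h"
    and "approximating_seq R \<mu> \<xi>"
    and "approximating_seq R \<mu> \<xi>'"
  shows "mutual_pressure_seq h \<xi> = mutual_pressure_seq h \<xi>'"
proof -
  note approx = assms(6,7)
  have far: "(\<lambda>N. real (card {j. j < N \<and> d < \<bar>\<xi> i N j - \<xi>' i N j\<bar>}) / real N) \<longlonglongrightarrow> 0"
    if "d > 0" for i d
    using approximating_seq_moment_diff[OF approx] approximating_seq_in_box[OF approx(1)]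
      approximating_seq_in_box[OF approx(2)] approximating_seq_sorted[OF approx(1)]
      approximating_seq_sorted[OF approx(2)] that
    by (intro far_proportion_tendsto_zero[where R = R]) auto
  have "(\<lambda>N. pressure_term h \<xi> N - pressure_term h \<xi>' N) \<longlonglongrightarrow> 0"
    using approximating_seq_in_box[OF approx(1)] approximating_seq_in_box[OF approx(2)] far
    by (intro pressure_term_diff_tendsto_zero[OF assms(5)])
  then show ?thesis
    unfolding mutual_pressure_seq_def by (rule limsup_eq_if_diff_tendsto_zero)
qed

end
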